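(* Let $\mathbb{X}$ be a discrete group with identity $\circ$, and let $\mu$ be a finitely supported probability measure on $\mathbb{X}$ satisfying (A1) $\mu(xzx^{-1})=\mu(z)$ for all $x,z\in\mathbb{X}$ and (A2) $\mu(z)=\mu(z^{-1})$ for all $z\in\mathbb{X}$. Let $(W_n)_{n\ge1}$ be i.i.d. samples from $\mu$, $(N_t)_{t\ge0}$ a unit-rate Poisson process independent of $(W_n)$, and for $t\ge 0$ and $z\in\mathbb{X}$ let $N_{t,z}:=\ell_z(W_1,\ldots,W_{N_t})$. Then $N_{t,z}$ is a Poisson random variable with mean $t\mu(z)$.
   Context: For $w=(w_1,\ldots,w_m)\in\mathbb{X}^m$ and $z\in\mathbb{X}$, $\ell_z(w):=\sum_{j=1}^m\mathbf{1}\{w_j=(w_{j+1}\cdots w_m)\,z\,(w_{j+1}\cdots w_m)^{-1}\}$, where for $j=m$ the product $w_{j+1}\cdots w_m$ is the identity $\circ$ (and $\ell_z$ of the empty sequence is $0$). *)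

theory Defs
  imports "HOL-Algebra.Group" "HOL-Probability.Probability"
begin

definition grp_prod :: "('a, 'b) monoid_scheme \<Rightarrow> 'a list \<Rightarrow> 'a" where
  "grp_prod G xs = foldr (\<lambda>x y. x \<otimes>\<^bsub>G\<^esub> y) xs \<one>\<^bsub>G\<^esub>"

text \<open>ell_z(w) = number of j in 1..m with w_j = s_j z s_j^{-1}, s_j = w_{j+1} ... w_m.
  Lists are 0-indexed: position j corresponds to w_{j+1}.\<close>
definition ell :: "('a, 'b) monoid_scheme \<Rightarrow> 'a \<Rightarrow> 'a list \<Rightarrow> nat" where
  "ell G z w = card {j. j < length w \<and>
      w ! j = grp_prod G (drop (Suc j) w) \<otimes>\<^bsub>G\<^esub> z \<otimes>\<^bsub>G\<^esub> inv\<^bsub>G\<^esub> (grp_prod G (drop (Suc j) w))}"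

text \<open>Probability that a Poisson variable with mean lam equals k (lam = 0: point mass at 0).\<close>
definition poisson_prob :: "real \<Rightarrow> nat \<Rightarrow> real" where
  "poisson_prob lam k = exp (- lam) * lam ^ k / fact k"

definition (in prob_space) unit_poisson_process :: "(real \<Rightarrow> 'a \<Rightarrow> nat) \<Rightarrow> bool" where
  "unit_poisson_process N \<longleftrightarrow>
     (\<forall>t\<ge>0. random_variable (count_space UNIV) (N t)) \<and>
     (\<forall>\<omega>\<in>space M. N 0 \<omega> = 0) \<and>
     (\<forall>\<omega>\<in>space M. \<forall>s t. 0 \<le> s \<longrightarrow> s \<le> t \<longrightarrow> N s \<omega> \<le> N t \<omega>) \<and>
     (\<forall>ts :: nat \<Rightarrow> real. \<forall>n. (0 \<le> ts 0 \<and> (\<forall>i<n. ts i \<le> ts (Suc i))) \<longrightarrow>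
        indep_vars (\<lambda>_. count_space UNIV) (\<lambda>i \<omega>. N (ts (Suc i)) \<omega> - N (ts i) \<omega>) {..<n}) \<and>
     (\<forall>s t k. 0 \<le> s \<longrightarrow> s \<le> t \<longrightarrow>
        prob {\<omega>\<in>space M. N t \<omega> - N s \<omega> = k} = poisson_prob (t - s) k)"

end

theory Submission
  imports Defs
begin

text \<open>
  Reading a word from the left, \<open>\<ell>\<^sub>z(x w) = \<ell>\<^sub>z(w) + [x = s z s\<^sup>-\<^sup>1]\<close> where \<open>s\<close> is the
  product of \<open>w\<close>. By (A1) the conjugate \<open>s z s\<^sup>-\<^sup>1\<close> has mass \<open>\<mu>(z)\<close> whatever \<open>w\<close> is, so
  under the product weights every letter contributes independently with probability \<open>\<mu>(z)\<close>
  and \<open>\<ell>\<^sub>z(W\<^sub>1 \<dots> W\<^sub>m)\<close> is Binomial\<open>(m, \<mu>(z))\<close>. Mixing these binomial laws over an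
  independent Poisson\<open>(t)\<close> count gives Poisson\<open>(t \<mu>(z))\<close> (Poisson thinning).
\<close>

lemma grp_prod_Nil [simp]: "grp_prod G [] = \<one>\<^bsub>G\<^esub>"
  by (simp add: grp_prod_def)

lemma grp_prod_Cons [simp]: "grp_prod G (x # w) = x \<otimes>\<^bsub>G\<^esub> grp_prod G w"
  by (simp add: grp_prod_def)

lemma (in monoid) grp_prod_closed: "set w \<subseteq> carrier G \<Longrightarrow> grp_prod G w \<in> carrier G"
  by (induction w) auto

lemma card_Collect_less_Suc:
  "card {j. j < Suc n \<and> P j} = of_bool (P 0) + card {j. j < n \<and> P (Suc j)}"
proof -
  have "{j. j < Suc n \<and> P j} = {j. j = 0 \<and> P 0} \<union> Suc ` {j. j < n \<and> P (Suc j)}"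
    by (auto simp: less_Suc_eq_0_disj)
  then show ?thesis
    by (simp add: card_Un_disjoint card_image)
qed

lemma ell_Nil [simp]: "ell G z [] = 0"
  by (simp add: ell_def)

lemma ell_Cons:
  "ell G z (x # w) = of_bool (x = grp_prod G w \<otimes>\<^bsub>G\<^esub> z \<otimes>\<^bsub>G\<^esub> inv\<^bsub>G\<^esub> (grp_prod G w)) + ell G z w"
  unfolding ell_def by (simp add: card_Collect_less_Suc)

lemma binomial_term_Suc:
  fixes p :: real
  shows "real (Suc m choose k) * p ^ k * (1 - p) ^ (Suc m - k) =
    p * of_bool (k \<noteq> 0) * (real (m choose (k - 1)) * p ^ (k - 1) * (1 - p) ^ (m - (k - 1)))
    + (1 - p) * (real (m choose k) * p ^ k * (1 - p) ^ (m - k))"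
proof (cases k)
  case (Suc j)
  show ?thesis
  proof (cases "j < m")
    case True
    then have "m - j = Suc (m - Suc j)" by simp
    with Suc True show ?thesis by (simp add: algebra_simps)
  qed (simp add: Suc algebra_simps)
qed simp

lemma sum_lists_length_Suc:
  assumes "finite A"
  shows "(\<Sum>w\<in>{w. set w \<subseteq> A \<and> length w = Suc m}. f w)
    = (\<Sum>w\<in>{w. set w \<subseteq> A \<and> length w = m}. \<Sum>x\<in>A. f (x # w))"
proof -
  let ?L = "{w. set w \<subseteq> A \<and> length w = m}"
  have inj: "inj_on (\<lambda>(w, x). x # w) (?L \<times> A)"
    by (auto simp: inj_on_def)
  have "(\<Sum>w\<in>{w. set w \<subseteq> A \<and> length w = Suc m}. f w) = (\<Sum>(w, x)\<in>?L \<times> A. f (x # w))"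
    unfolding lists_length_Suc_eq by (subst sum.reindex[OF inj]) (simp add: case_prod_beta comp_def)
  also have "\<dots> = (\<Sum>w\<in>?L. \<Sum>x\<in>A. f (x # w))"
    by (rule sum.cartesian_product[symmetric])
  finally show ?thesis .
qed

lemma sum_if_eq_mult:
  fixes mu :: "'a \<Rightarrow> real"
  assumes "finite S" and "{x. mu x \<noteq> 0} \<subseteq> S"
  shows "(\<Sum>x\<in>S. (if x = c then a else b) * mu x) = a * mu c + b * (sum mu S - mu c)"
proof -
  have "(\<Sum>x\<in>S. (if x = c then a else b) * mu x)
      = (\<Sum>x\<in>S. b * mu x + (if x = c then (a - b) * mu c else 0))"
    by (rule sum.cong) (auto simp: algebra_simps)
  also have "\<dots> = b * sum mu S + (a - b) * mu c"
    using assms by (auto simp: sum.distrib sum_distrib_left)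
  finally show ?thesis
    by (simp add: algebra_simps)
qed

lemma sum_ell_Cons:
  fixes mu :: "'g \<Rightarrow> real"
  assumes "finite {x. mu x \<noteq> 0}" and "(\<Sum>x\<in>{x. mu x \<noteq> 0}. mu x) = 1"
    and "mu (grp_prod G w \<otimes>\<^bsub>G\<^esub> z \<otimes>\<^bsub>G\<^esub> inv\<^bsub>G\<^esub> (grp_prod G w)) = mu z"
  shows "(\<Sum>x\<in>{x. mu x \<noteq> 0}. of_bool (ell G z (x # w) = k) * mu x)
    = mu z * of_bool (ell G z w + 1 = k) + (1 - mu z) * of_bool (ell G z w = k)"
proof -
  let ?c = "grp_prod G w \<otimes>\<^bsub>G\<^esub> z \<otimes>\<^bsub>G\<^esub> inv\<^bsub>G\<^esub> (grp_prod G w)"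
  have "of_bool (ell G z (x # w) = k)
      = (if x = ?c then of_bool (ell G z w + 1 = k) else of_bool (ell G z w = k) :: real)" for x
    by (simp add: ell_Cons)
  then show ?thesis
    using sum_if_eq_mult[OF assms(1) subset_refl, of ?c] assms(2,3) by simp
qed

lemma sum_words_ell_binomial:
  fixes G :: "('g, 'b) monoid_scheme" and mu :: "'g \<Rightarrow> real"
  assumes "group G"
    and fin: "finite {x. mu x \<noteq> 0}" and supp: "{x. mu x \<noteq> 0} \<subseteq> carrier G"
    and total: "(\<Sum>x\<in>{x. mu x \<noteq> 0}. mu x) = 1"
    and conj: "\<forall>x\<in>carrier G. \<forall>y\<in>carrier G. mu (x \<otimes>\<^bsub>G\<^esub> y \<otimes>\<^bsub>G\<^esub> inv\<^bsub>G\<^esub> x) = mu y"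
    and z: "z \<in> carrier G"
  shows "(\<Sum>w\<in>{w. set w \<subseteq> {x. mu x \<noteq> 0} \<and> length w = m}. of_bool (ell G z w = k) * prod_list (map mu w))
    = real (m choose k) * mu z ^ k * (1 - mu z) ^ (m - k)"
proof (induction m arbitrary: k)
  case 0
  have "{w. set w \<subseteq> {x. mu x \<noteq> 0} \<and> length w = 0} = {[]}"
    by auto
  then show ?case by simp
next
  case (Suc m)
  let ?S = "{x. mu x \<noteq> 0}" and ?p = "mu z"
  let ?L = "{w. set w \<subseteq> ?S \<and> length w = m}"
  have step: "(\<Sum>x\<in>?S. of_bool (ell G z (x # w) = k) * prod_list (map mu (x # w)))
      = (?p * of_bool (ell G z w + 1 = k) + (1 - ?p) * of_bool (ell G z w = k)) * prod_list (map mu w)"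
    if "w \<in> ?L" for w
  proof -
    interpret group G by fact
    have "grp_prod G w \<in> carrier G"
      using that supp by (auto intro: grp_prod_closed)
    then have "mu (grp_prod G w \<otimes>\<^bsub>G\<^esub> z \<otimes>\<^bsub>G\<^esub> inv\<^bsub>G\<^esub> (grp_prod G w)) = ?p"
      using conj z by blast
    then have "(\<Sum>x\<in>?S. of_bool (ell G z (x # w) = k) * mu x)
        = ?p * of_bool (ell G z w + 1 = k) + (1 - ?p) * of_bool (ell G z w = k)"
      by (rule sum_ell_Cons[OF fin total])
    moreover have "(\<Sum>x\<in>?S. of_bool (ell G z (x # w) = k) * prod_list (map mu (x # w)))
        = (\<Sum>x\<in>?S. of_bool (ell G z (x # w) = k) * mu x) * prod_list (map mu w)"
      by (simp add: sum_distrib_right mult.assoc)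
    ultimately show ?thesis
      by simp
  qed
  have "(\<Sum>w\<in>{w. set w \<subseteq> ?S \<and> length w = Suc m}. of_bool (ell G z w = k) * prod_list (map mu w))
      = (\<Sum>w\<in>?L. \<Sum>x\<in>?S. of_bool (ell G z (x # w) = k) * prod_list (map mu (x # w)))"
    by (rule sum_lists_length_Suc[OF fin])
  also have "\<dots> = (\<Sum>w\<in>?L.
      (?p * of_bool (ell G z w + 1 = k) + (1 - ?p) * of_bool (ell G z w = k)) * prod_list (map mu w))"
    by (rule sum.cong[OF refl step])
  also have "\<dots> = ?p * of_bool (k \<noteq> 0) * (\<Sum>w\<in>?L. of_bool (ell G z w = k - 1) * prod_list (map mu w))
      + (1 - ?p) * (\<Sum>w\<in>?L. of_bool (ell G z w = k) * prod_list (map mu w))"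
    by (cases k) (simp_all add: sum_distrib_left ring_distribs mult_ac flip: sum.distrib)
  also have "\<dots> = real (Suc m choose k) * ?p ^ k * (1 - ?p) ^ (Suc m - k)"
    by (simp only: Suc.IH binomial_term_Suc)
  finally show ?case .
qed

lemma poisson_prob_sums: "(\<lambda>j. poisson_prob lam j) sums 1"
proof -
  have "(\<lambda>j. exp (- lam) * (lam ^ j / fact j)) sums (exp (- lam) * exp lam)"
    using exp_converges[of lam] by (intro sums_mult) (simp add: divide_inverse mult.commute)
  then show ?thesis
    by (simp add: poisson_prob_def exp_add[symmetric])
qed

lemma poisson_thinning_sums:
  fixes t p :: real
  shows "(\<lambda>m. poisson_prob t m * (real (m choose k) * p ^ k * (1 - p) ^ (m - k))) sums poisson_prob (t * p) k"
proof -
  define f where "f m = poisson_prob t m * (real (m choose k) * p ^ k * (1 - p) ^ (m - k))" for m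
  have shifted: "f (j + k) = poisson_prob (t * p) k * poisson_prob (t * (1 - p)) j" for j
  proof -
    have "f (j + k) = exp (- t) * t ^ (j + k) / fact (j + k) * (fact (j + k) / (fact k * fact j)) * p ^ k * (1 - p) ^ j"
      by (simp add: f_def poisson_prob_def binomial_fact)
    also have "\<dots> = exp (- t) * (t ^ k * p ^ k) * (t ^ j * (1 - p) ^ j) / (fact k * fact j)"
      by (simp add: power_add)
    also have "exp (- t) = exp (- (t * p)) * exp (- (t * (1 - p)))"
      by (simp add: exp_add[symmetric] algebra_simps)
    finally show ?thesis
      by (simp add: poisson_prob_def power_mult_distrib)
  qed
  have "(\<lambda>j. f (j + k)) sums poisson_prob (t * p) k"
    unfolding shifted using sums_mult[OF poisson_prob_sums] by simp
  moreover have "(\<Sum>m<k. f m) = 0"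
    by (simp add: f_def binomial_eq_0)
  ultimately show ?thesis
    unfolding f_def[symmetric] by (simp add: sums_iff_shift)
qed

definition sample_word :: "(nat \<Rightarrow> 'a \<Rightarrow> 'g) \<Rightarrow> nat \<Rightarrow> 'a \<Rightarrow> 'g list" where
  "sample_word W m \<omega> = map (\<lambda>n. W n \<omega>) [1..<Suc m]"

lemma length_sample_word [simp]: "length (sample_word W m \<omega>) = m"
  by (simp add: sample_word_def)

lemma set_sample_word: "set (sample_word W m \<omega>) = (\<lambda>n. W n \<omega>) ` {1..m}"
  by (simp add: sample_word_def atLeastLessThanSuc_atLeastAtMost del: upt_Suc)

lemma nth_sample_word: "i < m \<Longrightarrow> sample_word W m \<omega> ! i = W (Suc i) \<omega>"
  by (simp add: sample_word_def del: upt_Suc)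

lemma sample_word_eq_iff:
  "sample_word W (length w) \<omega> = w \<longleftrightarrow> (\<forall>i<length w. W (Suc i) \<omega> = w ! i)"
proof
  assume "sample_word W (length w) \<omega> = w"
  then show "\<forall>i<length w. W (Suc i) \<omega> = w ! i"
    by (metis nth_sample_word)
next
  assume "\<forall>i<length w. W (Suc i) \<omega> = w ! i"
  then show "sample_word W (length w) \<omega> = w"
    by (intro nth_equalityI) (simp_all add: nth_sample_word)
qed

lemma sample_word_in_vimage_algebra:
  assumes "finite A"
  shows "{\<omega>\<in>\<Omega>. sample_word W m \<omega> \<in> A}
    \<in> sets (vimage_algebra \<Omega> (\<lambda>\<omega>. restrict (\<lambda>n. W n \<omega>) {1..}) (Pi\<^sub>M {1..} (\<lambda>_. count_space UNIV)))"
proof -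
  let ?P = "Pi\<^sub>M {1::nat..} (\<lambda>_. count_space (UNIV :: 'g set))"
  let ?H = "{h \<in> space ?P. \<exists>w\<in>A. length w = m \<and> (\<forall>i<m. h (Suc i) = w ! i)}"
  have [measurable]: "Measurable.pred ?P (\<lambda>h. h (Suc i) = c)" for i c
    by measurable
  have "?H \<in> sets ?P"
    using assms by measurable
  then have "(\<lambda>\<omega>. restrict (\<lambda>n. W n \<omega>) {1..}) -` ?H \<inter> \<Omega>
      \<in> sets (vimage_algebra \<Omega> (\<lambda>\<omega>. restrict (\<lambda>n. W n \<omega>) {1..}) ?P)"
    by (rule in_vimage_algebra)
  moreover have "(\<lambda>\<omega>. restrict (\<lambda>n. W n \<omega>) {1..}) -` ?H \<inter> \<Omega> = {\<omega>\<in>\<Omega>. sample_word W m \<omega> \<in> A}"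
  proof -
    have "(\<exists>w\<in>A. length w = m \<and> (\<forall>i<m. W (Suc i) \<omega> = w ! i)) \<longleftrightarrow> sample_word W m \<omega> \<in> A" for \<omega>
      by (metis length_sample_word sample_word_eq_iff)
    then show ?thesis
      by (auto simp: space_PiM)
  qed
  ultimately show ?thesis
    by simp
qed

lemma sets_vimage_algebra_component_subset:
  assumes "i \<in> I" and "\<And>\<omega> j. \<omega> \<in> \<Omega> \<Longrightarrow> j \<in> I \<Longrightarrow> X j \<omega> \<in> space (M j)"
  shows "sets (vimage_algebra \<Omega> (X i) (M i))
    \<subseteq> sets (vimage_algebra \<Omega> (\<lambda>\<omega>. restrict (\<lambda>j. X j \<omega>) I) (Pi\<^sub>M I M))"
proof (rule sets_image_in_sets)
  let ?F = "\<lambda>\<omega>. restrict (\<lambda>j. X j \<omega>) I"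
  have "?F \<in> vimage_algebra \<Omega> ?F (Pi\<^sub>M I M) \<rightarrow>\<^sub>M Pi\<^sub>M I M"
    using assms(2) by (intro measurable_vimage_algebra1) (auto simp: space_PiM)
  then have "(\<lambda>\<omega>. ?F \<omega> i) \<in> vimage_algebra \<Omega> ?F (Pi\<^sub>M I M) \<rightarrow>\<^sub>M M i"
    by (rule measurable_compose[OF _ measurable_component_singleton[OF assms(1)]])
  then show "X i \<in> vimage_algebra \<Omega> ?F (Pi\<^sub>M I M) \<rightarrow>\<^sub>M M i"
    using assms(1) by simp
qed simp

lemma
  assumes "A \<in> sets M" and "A \<subseteq> E" and "E - A \<subseteq> N" and "N \<in> null_sets M"
  shows sets_completion_null_diff: "E \<in> sets (completion M)"
    and measure_completion_null_diff: "measure (completion M) E = measure M A"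
proof -
  have E: "E = A \<union> (E - A)"
    using assms(2) by auto
  show "E \<in> sets (completion M)"
    using E assms(3,4,1) by (rule sets_completionI)
  have "E - A \<in> null_sets (completion M)"
    using assms(3) null_sets_completionI[OF assms(4)] by (rule null_sets_completion_subset)
  with assms(1) have "measure (completion M) (A \<union> (E - A)) = measure (completion M) A"
    by (intro measure_Un_null_set) auto
  with assms(1) E show "measure (completion M) E = measure M A"
    by simp
qed

context prob_space
begin

lemma indep_set_mono: "indep_set A B \<Longrightarrow> A' \<subseteq> A \<Longrightarrow> B' \<subseteq> B \<Longrightarrow> indep_set A' B'"
  unfolding indep_sets2_eq by blast

lemma indep_set_vimage_component:
  assumes "indep_set A (sets (vimage_algebra (space M) (\<lambda>\<omega>. restrict (\<lambda>j. X j \<omega>) I)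
      (Pi\<^sub>M I (\<lambda>_. count_space UNIV))))"
    and "i \<in> I"
  shows "indep_set A (sets (vimage_algebra (space M) (X i) (count_space UNIV)))"
  using assms(1) subset_refl
  by (rule indep_set_mono) (rule sets_vimage_algebra_component_subset[where X = X], use assms(2) in auto)

lemma unit_poisson_process_prob:
  assumes "unit_poisson_process N" and "0 \<le> t"
  shows "prob {\<omega>\<in>space M. N t \<omega> = k} = poisson_prob t k"
proof -
  have "{\<omega>\<in>space M. N t \<omega> = k} = {\<omega>\<in>space M. N t \<omega> - N 0 \<omega> = k}"
    using assms(1) by (auto simp: unit_poisson_process_def)
  then show ?thesis
    using assms by (simp add: unit_poisson_process_def)
qed

lemma prob_sample_word_eq:
  assumes W_indep: "indep_vars (\<lambda>_. count_space UNIV) W {1..}"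
    and W_law: "\<forall>n\<ge>1. \<forall>x. prob {\<omega>\<in>space M. W n \<omega> = x} = mu x"
  shows "prob {\<omega>\<in>space M. sample_word W (length w) \<omega> = w} = prod_list (map mu w)"
proof (cases "w = []")
  case True
  then show ?thesis
    by (simp add: sample_word_def prob_space)
next
  case False
  have "{\<omega>\<in>space M. sample_word W (length w) \<omega> = w}
      = (\<Inter>i\<in>Suc ` {..<length w}. W i -` {w ! (i - 1)} \<inter> space M)"
    using False by (auto simp: sample_word_eq_iff)
  also have "prob \<dots> = (\<Prod>i\<in>Suc ` {..<length w}. prob (W i -` {w ! (i - 1)} \<inter> space M))"
    using False by (intro indep_varsD[OF W_indep]) auto
  also have "\<dots> = (\<Prod>i<length w. prob {\<omega>\<in>space M. W (Suc i) \<omega> = w ! i})"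
    by (simp add: prod.reindex vimage_def Int_def conj_commute)
  also have "\<dots> = (\<Prod>i<length w. mu (w ! i))"
    using W_law by simp
  also have "\<dots> = prod_list (map mu w)"
    by (simp add: prod.list_conv_set_nth atLeast0LessThan)
  finally show ?thesis .
qed

lemma prob_sample_word_in:
  assumes W_indep: "indep_vars (\<lambda>_. count_space UNIV) W {1..}"
    and W_law: "\<forall>n\<ge>1. \<forall>x. prob {\<omega>\<in>space M. W n \<omega> = x} = mu x"
    and "finite A" and "\<forall>w\<in>A. length w = m"
  shows "prob {\<omega>\<in>space M. sample_word W m \<omega> \<in> A} = (\<Sum>w\<in>A. prod_list (map mu w))"
proof -
  have [measurable]: "W (Suc n) \<in> M \<rightarrow>\<^sub>M count_space UNIV" for n
    using W_indep by (simp add: indep_vars_def)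
  have "{\<omega>\<in>space M. sample_word W m \<omega> \<in> A} = (\<Union>w\<in>A. {\<omega>\<in>space M. sample_word W (length w) \<omega> = w})"
    using assms(4) by auto
  also have "prob \<dots> = (\<Sum>w\<in>A. prob {\<omega>\<in>space M. sample_word W (length w) \<omega> = w})"
  proof (rule measure_finite_Union)
    have "{\<omega>\<in>space M. sample_word W (length w) \<omega> = w} \<in> events" for w
      unfolding sample_word_eq_iff by measurable
    then show "(\<lambda>w. {\<omega>\<in>space M. sample_word W (length w) \<omega> = w}) ` A \<subseteq> events"
      by auto
  qed (use assms(3,4) in \<open>auto simp: disjoint_family_on_def\<close>)
  also have "\<dots> = (\<Sum>w\<in>A. prod_list (map mu w))"
    using prob_sample_word_eq[OF W_indep W_law] by simp
  finally show ?thesis .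
qed

lemma AE_sample_in_support:
  fixes W :: "nat \<Rightarrow> 'a \<Rightarrow> 'g"
  assumes W_meas: "\<And>n. n \<ge> 1 \<Longrightarrow> random_variable (count_space UNIV) (W n)"
    and W_law: "\<forall>n\<ge>1. \<forall>x. prob {\<omega>\<in>space M. W n \<omega> = x} = mu x"
    and fin: "finite {x. mu x \<noteq> 0}" and total: "(\<Sum>x\<in>{x. mu x \<noteq> 0}. mu x) = 1"
  shows "AE \<omega> in M. \<forall>n\<ge>1. mu (W n \<omega>) \<noteq> 0"
proof -
  have AE_n: "AE \<omega> in M. mu (W n \<omega>) \<noteq> 0" if "n \<ge> 1" for n
  proof -
    have "{\<omega>\<in>space M. mu (W n \<omega>) \<noteq> 0} = (\<Union>x\<in>{x. mu x \<noteq> 0}. {\<omega>\<in>space M. W n \<omega> = x})"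
      by auto
    also have "prob \<dots> = (\<Sum>x\<in>{x. mu x \<noteq> 0}. prob {\<omega>\<in>space M. W n \<omega> = x})"
      using W_meas[OF that] fin by (intro measure_finite_Union) (auto simp: disjoint_family_on_def)
    finally have "prob {\<omega>\<in>space M. mu (W n \<omega>) \<noteq> 0} = 1"
      using W_law that total by simp
    then show ?thesis
      by (rule AE_prob_1[THEN eventually_mono]) simp
  qed
  have "AE \<omega> in M. n \<ge> 1 \<longrightarrow> mu (W n \<omega>) \<noteq> 0" for n
    by (rule AE_impI) (rule AE_n)
  then show ?thesis
    unfolding AE_all_countable by blast
qed

lemma
  fixes W :: "nat \<Rightarrow> 'a \<Rightarrow> 'g" and K :: "'a \<Rightarrow> nat" and mu :: "'g \<Rightarrow> real"
    and P :: "'g list \<Rightarrow> bool" and m :: nat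
  assumes W_indep: "indep_vars (\<lambda>_. count_space UNIV) W {1..}"
    and W_law: "\<forall>n\<ge>1. \<forall>x. prob {\<omega>\<in>space M. W n \<omega> = x} = mu x"
    and fin: "finite {x. mu x \<noteq> 0}"
    and indep: "indep_set
      (sets (vimage_algebra (space M) (\<lambda>\<omega>. restrict (\<lambda>n. W n \<omega>) {1..}) (Pi\<^sub>M {1..} (\<lambda>_. count_space UNIV))))
      (sets (vimage_algebra (space M) K (count_space UNIV)))"
  defines "D \<equiv> {\<omega>\<in>space M. K \<omega> = m \<and> set (sample_word W m \<omega>) \<subseteq> {x. mu x \<noteq> 0} \<and> P (sample_word W m \<omega>)}"
  shows sample_word_count_event: "D \<in> events"
    and prob_sample_word_count: "prob D = prob {\<omega>\<in>space M. K \<omega> = m} *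
      (\<Sum>w\<in>{w. set w \<subseteq> {x. mu x \<noteq> 0} \<and> length w = m}. of_bool (P w) * prod_list (map mu w))"
proof -
  let ?L = "{w. set w \<subseteq> {x. mu x \<noteq> 0} \<and> length w = m}"
  let ?V = "{\<omega>\<in>space M. sample_word W m \<omega> \<in> {w\<in>?L. P w}}"
  let ?K = "{\<omega>\<in>space M. K \<omega> = m}"
  have finL: "finite ?L"
    using fin by (simp add: finite_lists_length_eq)
  have D: "D = ?V \<inter> ?K"
    by (auto simp: D_def)
  have V_vimage: "?V \<in> sets (vimage_algebra (space M) (\<lambda>\<omega>. restrict (\<lambda>n. W n \<omega>) {1..})
      (Pi\<^sub>M {1..} (\<lambda>_. count_space UNIV)))"
    by (intro sample_word_in_vimage_algebra finite_subset[OF _ finL]) auto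
  have K_vimage: "?K \<in> sets (vimage_algebra (space M) K (count_space UNIV))"
    using in_vimage_algebra[of "{m}" "count_space UNIV" K "space M"] by (simp add: vimage_def Int_def conj_commute)
  show "D \<in> events"
    unfolding D using indep_setD_ev1[OF indep] indep_setD_ev2[OF indep] V_vimage K_vimage by blast
  have "prob ?V = (\<Sum>w\<in>{w\<in>?L. P w}. prod_list (map mu w))"
    by (rule prob_sample_word_in[OF W_indep W_law finite_subset[OF _ finL]]) auto
  also have "\<dots> = (\<Sum>w\<in>?L. of_bool (P w) * prod_list (map mu w))"
    unfolding sum.inter_filter[OF finL] by (rule sum.cong) auto
  finally show "prob D = prob ?K * (\<Sum>w\<in>?L. of_bool (P w) * prod_list (map mu w))"
    unfolding D using indep_setD[OF indep V_vimage K_vimage] by simp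
qed

text \<open>
  The event below need not be \<open>M\<close>-measurable, as the sequence \<open>W\<close> only generates
  preimages of product-measurable sets of letters; outside the null set where some \<open>W\<^sub>n\<close>
  leaves the finite support of \<open>\<mu>\<close> it is the disjoint union of the events of
  \<open>prob_sample_word_count\<close>.
\<close>

lemma
  fixes W :: "nat \<Rightarrow> 'a \<Rightarrow> 'g" and K :: "'a \<Rightarrow> nat" and mu :: "'g \<Rightarrow> real"
    and P :: "'g list \<Rightarrow> bool"
  assumes W_indep: "indep_vars (\<lambda>_. count_space UNIV) W {1..}"
    and W_law: "\<forall>n\<ge>1. \<forall>x. prob {\<omega>\<in>space M. W n \<omega> = x} = mu x"
    and fin: "finite {x. mu x \<noteq> 0}" and total: "(\<Sum>x\<in>{x. mu x \<noteq> 0}. mu x) = 1"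
    and indep: "indep_set
      (sets (vimage_algebra (space M) (\<lambda>\<omega>. restrict (\<lambda>n. W n \<omega>) {1..}) (Pi\<^sub>M {1..} (\<lambda>_. count_space UNIV))))
      (sets (vimage_algebra (space M) K (count_space UNIV)))"
  defines "E \<equiv> {\<omega>\<in>space M. P (sample_word W (K \<omega>) \<omega>)}"
  shows sets_compound_sample_word: "E \<in> sets (completion M)"
    and sums_compound_sample_word: "(\<lambda>m. prob {\<omega>\<in>space M. K \<omega> = m} *
        (\<Sum>w\<in>{w. set w \<subseteq> {x. mu x \<noteq> 0} \<and> length w = m}. of_bool (P w) * prod_list (map mu w)))
      sums measure (completion M) E"
proof -
  define D where "D m =
    {\<omega>\<in>space M. K \<omega> = m \<and> set (sample_word W m \<omega>) \<subseteq> {x. mu x \<noteq> 0} \<and> P (sample_word W m \<omega>)}" for m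
  have D_events: "D m \<in> events" for m
    unfolding D_def by (rule sample_word_count_event[OF W_indep W_law fin indep])
  have sums_D: "(\<lambda>m. prob (D m)) sums prob (\<Union>m. D m)"
    using D_events by (intro finite_measure_UNION) (auto simp: D_def disjoint_family_on_def)
  obtain Z where Z: "Z \<in> null_sets M"
    and outside_Z: "\<And>\<omega> n. \<omega> \<in> space M - Z \<Longrightarrow> n \<ge> 1 \<Longrightarrow> mu (W n \<omega>) \<noteq> 0"
    using AE_sample_in_support[OF _ W_law fin total] W_indep
    by (auto simp: indep_vars_def elim!: AE_E3)
  have UD_events: "(\<Union>m. D m) \<in> events"
    using D_events by auto
  have UD_subset: "(\<Union>m. D m) \<subseteq> E"
    by (auto simp: D_def E_def)
  have diff_subset: "E - (\<Union>m. D m) \<subseteq> Z"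
  proof
    fix \<omega> assume \<omega>: "\<omega> \<in> E - (\<Union>m. D m)"
    show "\<omega> \<in> Z"
    proof (rule ccontr)
      assume "\<omega> \<notin> Z"
      with \<omega> outside_Z have "\<omega> \<in> D (K \<omega>)"
        by (auto simp: D_def E_def set_sample_word)
      with \<omega> show False
        by blast
    qed
  qed
  show "E \<in> sets (completion M)"
    by (rule sets_completion_null_diff[OF UD_events UD_subset diff_subset Z])
  have "measure (completion M) E = prob (\<Union>m. D m)"
    by (rule measure_completion_null_diff[OF UD_events UD_subset diff_subset Z])
  with sums_D show "(\<lambda>m. prob {\<omega>\<in>space M. K \<omega> = m} *
      (\<Sum>w\<in>{w. set w \<subseteq> {x. mu x \<noteq> 0} \<and> length w = m}. of_bool (P w) * prod_list (map mu w)))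
      sums measure (completion M) E"
    unfolding D_def by (simp only: prob_sample_word_count[OF W_indep W_law fin indep])
qed

end

theorem lemma3:
  fixes G :: "('g, 'b) monoid_scheme"
    and mu :: "'g \<Rightarrow> real"
    and M :: "'w measure"
    and W :: "nat \<Rightarrow> 'w \<Rightarrow> 'g"
    and N :: "real \<Rightarrow> 'w \<Rightarrow> nat"
    and t :: real and z :: 'g
  assumes grp: "group G"
    and mu_nonneg: "\<forall>x. 0 \<le> mu x"
    and mu_fin: "finite {x. mu x \<noteq> 0}"
    and mu_carrier: "{x. mu x \<noteq> 0} \<subseteq> carrier G"
    and mu_prob: "(\<Sum>x\<in>{x. mu x \<noteq> 0}. mu x) = 1"
    and A1: "\<forall>x\<in>carrier G. \<forall>y\<in>carrier G. mu (x \<otimes>\<^bsub>G\<^esub> y \<otimes>\<^bsub>G\<^esub> inv\<^bsub>G\<^esub> x) = mu y"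
    and A2: "\<forall>y\<in>carrier G. mu (inv\<^bsub>G\<^esub> y) = mu y"
    and P: "prob_space M"
    and W_indep: "prob_space.indep_vars M (\<lambda>_. count_space UNIV) W {1..}"
    and W_law: "\<forall>n\<ge>1. \<forall>x. measure M {\<omega>\<in>space M. W n \<omega> = x} = mu x"
    and N_pp: "prob_space.unit_poisson_process M N"
    and WN_indep: "prob_space.indep_set M
        (sets (vimage_algebra (space M) (\<lambda>\<omega>. restrict (\<lambda>n. W n \<omega>) {1..})
                 (Pi\<^sub>M {1..} (\<lambda>_. count_space UNIV))))
        (sets (vimage_algebra (space M) (\<lambda>\<omega>. restrict (\<lambda>s. N s \<omega>) {0..})
                 (Pi\<^sub>M {0..} (\<lambda>_. count_space UNIV))))"
    and t_nonneg: "0 \<le> t"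
    and z_in: "z \<in> carrier G"
  shows "(\<lambda>\<omega>. ell G z (map (\<lambda>n. W n \<omega>) [1..<Suc (N t \<omega>)]))
           \<in> measurable (completion M) (count_space UNIV)
       \<and> (\<forall>k. measure (completion M)
              {\<omega>\<in>space M. ell G z (map (\<lambda>n. W n \<omega>) [1..<Suc (N t \<omega>)]) = k}
            = poisson_prob (t * mu z) k)"
proof -
  interpret prob_space M
    by (rule P)
  let ?E = "\<lambda>k. {\<omega>\<in>space M. ell G z (sample_word W (N t \<omega>) \<omega>) = k}"
  have indep: "indep_set
      (sets (vimage_algebra (space M) (\<lambda>\<omega>. restrict (\<lambda>n. W n \<omega>) {1..}) (Pi\<^sub>M {1..} (\<lambda>_. count_space UNIV))))
      (sets (vimage_algebra (space M) (N t) (count_space UNIV)))"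
    using WN_indep by (rule indep_set_vimage_component) (simp add: t_nonneg)
  note compound = sets_compound_sample_word[OF W_indep W_law mu_fin mu_prob indep]
    sums_compound_sample_word[OF W_indep W_law mu_fin mu_prob indep]
  have E_sets: "?E k \<in> sets (completion M)" for k
    by (rule compound(1)[of "\<lambda>w. ell G z w = k"])
  have "(\<lambda>m. poisson_prob t m * (real (m choose k) * mu z ^ k * (1 - mu z) ^ (m - k)))
      sums measure (completion M) (?E k)" for k
    using compound(2)[of "\<lambda>w. ell G z w = k"]
    unfolding unit_poisson_process_prob[OF N_pp t_nonneg]
      sum_words_ell_binomial[OF grp mu_fin mu_carrier mu_prob A1 z_in] .
  then have E_law: "measure (completion M) (?E k) = poisson_prob (t * mu z) k" for k
    using poisson_thinning_sums by (rule sums_unique2)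
  have "(\<lambda>\<omega>. ell G z (sample_word W (N t \<omega>) \<omega>)) -` {k} \<inter> space (completion M) = ?E k" for k
    by auto
  then have "(\<lambda>\<omega>. ell G z (sample_word W (N t \<omega>) \<omega>)) \<in> completion M \<rightarrow>\<^sub>M count_space UNIV"
    using E_sets by (simp add: measurable_count_space_eq_countable)
  with E_law show ?thesis
    unfolding sample_word_def by blast
qed

end
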